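(* Let $M$ be a finite set with $|M|=m$ and let $\mu$ be a probability distribution on the power set $\mathcal{P}(M)$. For $k\in\mathbb{N}$ let $S_1,\dots,S_k$ be independent random subsets of $M$, each with $\Pr[S_i=X]=\mu(\{X\})$ for $X\subseteq M$, and let $F^k_\ell$ denote the event $|\bigcap_{i=1}^k S_i|\ge\ell$. For $X\subseteq M$ let $X^\uparrow=\{Y\subseteq M: X\subseteq Y\}$, let $\mathcal{M}_\ell=\{X\subseteq M:|X|=\ell\}$, and let $A_\ell$ be the multiset $\{\mu(X^\uparrow): X\in\mathcal{M}_\ell\}$ for $\ell\in\{0,1,\dots,m\}$. Then the values $\Pr[F^k_\ell]$ for $\ell\in\{0,\dots,m\}$ and $k\in\{1,\dots,\binom{m}{\ell}\}$ continuously determine the multisets $A_\ell$ for all $\ell\in\{0,\dots,m\}$. That is, for every probability distribution $\mu$ on $\mathcal{P}(M)$ and every $\varepsilon>0$ there is $\delta>0$ such that for every probability distribution $\mu'$ on $\mathcal{P}(M)$ satisfying $|\Pr_{\mu}[F^k_\ell]-\Pr_{\mu'}[F^k_\ell]|\le\delta$ for all $\ell\in\{0,\dots,m\}$ and $k\in\{1,\dots,\binom{m}{\ell}\}$, there exist, for each $\ell$, a bijection $\pi_\ell:\mathcal{M}_\ell\to\mathcal{M}_\ell$ with $|\mu(X^\uparrow)-\mu'(\pi_\ell(X)^\uparrow)|\le\varepsilon$ for all $X\in\mathcal{M}_\ell$ (where $\Pr_{\mu}$, $\Pr_{\mu'}$ denote the probabilities computed with $S_i$ distributed according to $\mu$,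 resp. $\mu'$). In particular, if $\Pr_\mu[F^k_\ell]=\Pr_{\mu'}[F^k_\ell]$ for all such $\ell,k$, then the multisets $A_\ell$ computed from $\mu$ and from $\mu'$ coincide for every $\ell$. *)

theory Defs
  imports "HOL-Probability.Probability"
begin

text \<open>A probability distribution on the power set of M: a pmf on sets supported on Pow M.\<close>

definition PrF :: "'a set pmf \<Rightarrow> nat \<Rightarrow> nat \<Rightarrow> real" where
  "PrF \<mu> k l = measure_pmf.prob (Pi_pmf {1..k} {} (\<lambda>_. \<mu>))
                 {S. l \<le> card (\<Inter>i\<in>{1..k}. S i)}"

definition up_mass :: "'a set \<Rightarrow> 'a set pmf \<Rightarrow> 'a set \<Rightarrow> real" where
  "up_mass M \<mu> X = measure_pmf.prob \<mu> {Y. Y \<subseteq> M \<and> X \<subseteq> Y}"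

definition level_sets :: "'a set \<Rightarrow> nat \<Rightarrow> 'a set set" where
  "level_sets M l = {X. X \<subseteq> M \<and> card X = l}"

end

theory Submission
  imports Defs "HOL-Computational_Algebra.Polynomial_FPS" "HOL-Combinatorics.Permutations"
begin

text \<open>Let \<open>N\<^sub>k = |S\<^sub>1 \<inter> \<dots> \<inter> S\<^sub>k|\<close>. The probabilities \<open>Pr[F\<^sup>k\<^sub>l]\<close> are the tails of the law
  of \<open>N\<^sub>k\<close>, and its binomial moment \<open>E[(N\<^sub>k choose j)]\<close> is the \<open>k\<close>-th power sum of \<open>A\<^sub>j\<close>,
  because a \<open>j\<close>-set \<open>X\<close> lies in every \<open>S\<^sub>i\<close> with probability \<open>\<mu>(X\<^sup>\<up>)\<^sup>k\<close>. Binomial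
  moments are unitriangular in the point masses, so by downward induction on \<open>l\<close> the tail
  \<open>Pr[F\<^sup>k\<^sub>l]\<close> and the multisets \<open>A\<^sub>j\<close>, \<open>j > l\<close>, determine the power sums of \<open>A\<^sub>l\<close> of
  order \<open>k \<le> |A\<^sub>l|\<close>, which determine \<open>A\<^sub>l\<close> by Newton's identities.

  Continuity then follows by compactness: if \<open>\<mu>\<^sub>n\<close> are counterexamples with
  \<open>Pr\<^sub>\<mu>\<^sub>n[F\<^sup>k\<^sub>l] \<rightarrow> Pr\<^sub>\<mu>[F\<^sup>k\<^sub>l]\<close>, a subsequence converges pointwise to a distribution with
  the same values \<open>Pr[F\<^sup>k\<^sub>l]\<close> as \<open>\<mu>\<close>, hence with the same multisets \<open>A\<^sub>l\<close>, and the
  multisets of \<open>\<mu>\<^sub>n\<close> converge to these along that subsequence.\<close>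

section \<open>Power sums determine a multiset\<close>

definition recip_char_poly :: "'a::comm_ring_1 multiset \<Rightarrow> 'a poly" where
  "recip_char_poly A = (\<Prod>a\<in>#A. [:1, -a:])"

definition power_sum_fps :: "'a::comm_ring_1 multiset \<Rightarrow> 'a fps" where
  "power_sum_fps A = Abs_fps (\<lambda>k. if k = 0 then 0 else (\<Sum>a\<in>#A. a ^ k))"

lemma recip_char_poly_empty [simp]: "recip_char_poly {#} = 1"
  by (simp add: recip_char_poly_def)

lemma recip_char_poly_add_mset [simp]:
  "recip_char_poly (add_mset a A) = [:1, -a:] * recip_char_poly A"
  by (simp add: recip_char_poly_def)

lemma poly_recip_char_poly: "poly (recip_char_poly A) x = (\<Prod>a\<in>#A. 1 - x * a)"
  by (simp add: recip_char_poly_def poly_prod_mset)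

lemma coeff_0_recip_char_poly [simp]: "coeff (recip_char_poly A) 0 = 1"
  by (induction A) (simp_all add: coeff_mult)

lemma degree_recip_char_poly: "degree (recip_char_poly A) \<le> size A"
proof (induction A)
  case (add a A)
  have "degree ([:1, -a:] * recip_char_poly A) \<le> 1 + degree (recip_char_poly A)"
    by (rule order.trans[OF degree_mult_le]) simp
  with add.IH show ?case by simp
qed simp

lemma recip_char_poly_filter_nonzero:
  "recip_char_poly (filter_mset (\<lambda>a. a \<noteq> 0) A) = recip_char_poly A"
  by (induction A) simp_all

lemma power_sum_fps_add_mset:
  "power_sum_fps (add_mset a A) = Abs_fps (\<lambda>k. if k = 0 then 0 else a ^ k) + power_sum_fps A"
  by (rule fps_ext) (simp add: power_sum_fps_def)

lemma fps_geometric_tail: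
  fixes a :: "'a::comm_ring_1"
  shows "fps_const a * fps_X = (1 + fps_const (-a) * fps_X) * Abs_fps (\<lambda>k. if k = 0 then 0 else a ^ k)"
proof (rule fps_ext)
  fix n
  show "fps_nth (fps_const a * fps_X) n =
        fps_nth ((1 + fps_const (-a) * fps_X) * Abs_fps (\<lambda>k. if k = 0 then 0 else a ^ k)) n"
    by (cases n) (auto simp: algebra_simps fps_X_mult_nth)
qed

lemma fps_X_mult_deriv_recip_char_poly:
  "fps_X * fps_deriv (fps_of_poly (recip_char_poly A)) =
     - fps_of_poly (recip_char_poly A) * power_sum_fps A"
proof (induction A)
  case empty
  show ?case by (simp add: power_sum_fps_def fps_ext)
next
  case (add a A)
  define F where "F = fps_of_poly (recip_char_poly A)"
  define L where "L = 1 + fps_const (-a) * fps_X"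
  define q where "q = Abs_fps (\<lambda>k. if k = 0 then 0 else a ^ k)"
  have prod: "fps_of_poly (recip_char_poly (add_mset a A)) = L * F"
    by (simp add: F_def L_def fps_of_poly_mult fps_of_poly_linear')
  have "fps_X * fps_deriv (L * F) = - (fps_const a * fps_X) * F + L * (fps_X * fps_deriv F)"
    by (simp add: L_def algebra_simps fps_const_neg [symmetric] del: fps_const_neg)
  also have "\<dots> = - (L * q) * F - L * F * power_sum_fps A"
    using add.IH fps_geometric_tail[of a]
    by (simp add: F_def L_def q_def algebra_simps del: fps_const_neg)
  also have "\<dots> = - (L * F) * (q + power_sum_fps A)"
    by (simp add: algebra_simps)
  finally show ?case
    by (simp only: prod power_sum_fps_add_mset q_def)
qed

lemma newton_identity:
  "of_nat n * coeff (recip_char_poly A) n =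
     - (\<Sum>i\<le>n. coeff (recip_char_poly A) i * fps_nth (power_sum_fps A) (n - i))"
proof -
  have "fps_nth (fps_X * fps_deriv (fps_of_poly (recip_char_poly A))) n =
        fps_nth (- fps_of_poly (recip_char_poly A) * power_sum_fps A) n"
    by (simp only: fps_X_mult_deriv_recip_char_poly)
  moreover have "fps_nth (fps_X * fps_deriv (fps_of_poly (recip_char_poly A))) n =
      of_nat n * coeff (recip_char_poly A) n"
    by (cases n) (simp_all add: fps_X_mult_nth)
  ultimately show ?thesis
    by (simp add: fps_mult_nth atLeast0AtMost sum_negf)
qed

lemma recip_char_poly_eq_if_power_sums_eq:
  fixes A B :: "'a::field_char_0 multiset"
  assumes "size A = size B"
    and "\<And>k. 1 \<le> k \<Longrightarrow> k \<le> size A \<Longrightarrow> (\<Sum>a\<in>#A. a ^ k) = (\<Sum>b\<in>#B. b ^ k)"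
  shows "recip_char_poly A = recip_char_poly B"
proof -
  have power_sums: "fps_nth (power_sum_fps A) k = fps_nth (power_sum_fps B) k" if "k \<le> size A" for k
    using assms(2) that by (auto simp: power_sum_fps_def)
  have low: "coeff (recip_char_poly A) n = coeff (recip_char_poly B) n" if "n \<le> size A" for n
    using that
  proof (induction n rule: less_induct)
    case (less n)
    show ?case
    proof (cases "n = 0")
      case False
      have "(\<Sum>i\<le>n. coeff (recip_char_poly A) i * fps_nth (power_sum_fps A) (n - i)) =
            (\<Sum>i\<le>n. coeff (recip_char_poly B) i * fps_nth (power_sum_fps B) (n - i))"
      proof (rule sum.cong[OF refl])
        fix i assume "i \<in> {..n}"
        then consider "i = n" | "i < n" by fastforce
        then show "coeff (recip_char_poly A) i * fps_nth (power_sum_fps A) (n - i) =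
                   coeff (recip_char_poly B) i * fps_nth (power_sum_fps B) (n - i)"
          by cases (use less power_sums[of "n - i"] in \<open>auto simp: power_sum_fps_def\<close>)
      qed
      then have "of_nat n * coeff (recip_char_poly A) n = of_nat n * coeff (recip_char_poly B) n"
        by (simp only: newton_identity)
      with False show ?thesis by simp
    qed simp
  qed
  show ?thesis
  proof (rule poly_eqI)
    fix n
    show "coeff (recip_char_poly A) n = coeff (recip_char_poly B) n"
    proof (cases "n \<le> size A")
      case False
      then show ?thesis
        using degree_recip_char_poly[of A] degree_recip_char_poly[of B] assms(1)
        by (simp add: coeff_eq_0)
    qed (rule low)
  qed
qed

lemma poly_recip_char_poly_inverse_eq_0_iff:
  fixes a :: "'a::field"
  assumes "a \<noteq> 0"
  shows "poly (recip_char_poly B) (inverse a) = 0 \<longleftrightarrow> a \<in># B"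
proof -
  have "1 - inverse a * b = 0 \<longleftrightarrow> b = a" for b
    using assms by (auto simp: field_simps)
  then show ?thesis
    by (auto simp: poly_recip_char_poly prod_mset_zero_iff)
qed

lemma recip_char_poly_inj_nonzero:
  fixes A B :: "'a::field multiset"
  assumes "0 \<notin># A" and "0 \<notin># B" and "recip_char_poly A = recip_char_poly B"
  shows "A = B"
  using assms
proof (induction A arbitrary: B)
  case empty
  show ?case
  proof (rule ccontr)
    assume "{#} \<noteq> B"
    then obtain b where "b \<in># B" by (metis multiset_nonemptyE)
    with empty.prems(2) have "poly (recip_char_poly B) (inverse b) = 0"
      by (subst poly_recip_char_poly_inverse_eq_0_iff) auto
    with empty.prems(3) show False by (metis poly_1 recip_char_poly_empty one_neq_zero)
  qed
next
  case (add a A)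
  have "a \<noteq> 0" using add.prems(1) by auto
  then have "a \<in># B"
    using add.prems(3) poly_recip_char_poly_inverse_eq_0_iff[of a]
    by (metis union_single_eq_member)
  then have B: "B = add_mset a (B - {#a#})" by simp
  have "[:1, -a:] * recip_char_poly A = [:1, -a:] * recip_char_poly (B - {#a#})"
    using add.prems(3) B by (metis recip_char_poly_add_mset)
  moreover have "[:1, -a:] \<noteq> 0" by simp
  ultimately have "recip_char_poly A = recip_char_poly (B - {#a#})"
    by (metis mult_left_cancel)
  with add.prems have "A = B - {#a#}"
    by (intro add.IH) (auto dest: in_diffD)
  then show ?case by (subst B) simp
qed

lemma size_eq_size_filter_nonzero_plus_count_0:
  "size A = size (filter_mset (\<lambda>a. a \<noteq> 0) A) + count A 0"
  by (induction A) auto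

theorem mset_eq_if_power_sums_eq:
  fixes A B :: "'a::field_char_0 multiset"
  assumes "size A = size B"
    and "\<And>k. 1 \<le> k \<Longrightarrow> k \<le> size A \<Longrightarrow> (\<Sum>a\<in>#A. a ^ k) = (\<Sum>b\<in>#B. b ^ k)"
  shows "A = B"
proof -
  have "recip_char_poly A = recip_char_poly B"
    using assms by (rule recip_char_poly_eq_if_power_sums_eq)
  then have nonzero: "filter_mset (\<lambda>a. a \<noteq> 0) A = filter_mset (\<lambda>a. a \<noteq> 0) B"
    by (intro recip_char_poly_inj_nonzero) (auto simp: recip_char_poly_filter_nonzero)
  then have zeros: "count A 0 = count B 0"
    using assms(1) size_eq_size_filter_nonzero_plus_count_0[of A]
      size_eq_size_filter_nonzero_plus_count_0[of B]
    by simp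
  show ?thesis
  proof (rule multiset_eqI)
    fix x
    show "count A x = count B x"
      using zeros arg_cong[OF nonzero, of "\<lambda>C. count C x"] by (cases "x = 0") simp_all
  qed
qed

section \<open>Binomial moments of the intersection size\<close>

definition inter_card_pmf :: "'a set pmf \<Rightarrow> nat \<Rightarrow> nat pmf" where
  "inter_card_pmf \<nu> k = map_pmf (\<lambda>S. card (\<Inter>i\<in>{1..k}. S i)) (Pi_pmf {1..k} {} (\<lambda>_. \<nu>))"

definition up_masses :: "'a set \<Rightarrow> 'a set pmf \<Rightarrow> nat \<Rightarrow> real multiset" where
  "up_masses M \<nu> l = image_mset (up_mass M \<nu>) (mset_set (level_sets M l))"

lemma finite_level_sets: "finite M \<Longrightarrow> finite (level_sets M l)"
  by (simp add: level_sets_def)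

lemma card_level_sets: "finite M \<Longrightarrow> card (level_sets M l) = card M choose l"
  by (simp add: level_sets_def n_subsets)

lemma size_up_masses: "finite M \<Longrightarrow> size (up_masses M \<nu> l) = card M choose l"
  by (simp add: up_masses_def card_level_sets)

lemma up_mass_eq_prob_superset:
  assumes "set_pmf \<nu> \<subseteq> Pow M"
  shows "up_mass M \<nu> X = measure_pmf.prob \<nu> {Y. X \<subseteq> Y}"
proof -
  have "{Y. Y \<subseteq> M \<and> X \<subseteq> Y} \<inter> set_pmf \<nu> = {Y. X \<subseteq> Y} \<inter> set_pmf \<nu>"
    using assms by auto
  then show ?thesis
    unfolding up_mass_def by (metis measure_Int_set_pmf)
qed

lemma Inter_subset_if_in_set_Pi_pmf:
  fixes k :: nat
  assumes "set_pmf \<nu> \<subseteq> Pow M" and "1 \<le> k" and "S \<in> set_pmf (Pi_pmf {1..k} {} (\<lambda>_. \<nu>))"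
  shows "(\<Inter>i\<in>{1..k}. S i) \<subseteq> M"
proof -
  have "S 1 \<in> set_pmf \<nu>"
    using assms(2,3) set_Pi_pmf_subset'[OF finite_atLeastAtMost, of 1 k "{}" "\<lambda>_. \<nu>"]
    by (auto simp: PiE_dflt_def)
  moreover have "(\<Inter>i\<in>{1..k}. S i) \<subseteq> S 1"
    using assms(2) by auto
  ultimately show ?thesis
    using assms(1) by auto
qed

lemma set_pmf_inter_card_pmf:
  assumes "finite M" and "set_pmf \<nu> \<subseteq> Pow M" and "1 \<le> k"
  shows "set_pmf (inter_card_pmf \<nu> k) \<subseteq> {..card M}"
  using Inter_subset_if_in_set_Pi_pmf[OF assms(2,3)] assms(1)
  by (auto simp: inter_card_pmf_def intro: card_mono)

lemma PrF_eq_tail_sum: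
  assumes "finite M" and "set_pmf \<nu> \<subseteq> Pow M" and "1 \<le> k"
  shows "PrF \<nu> k l = (\<Sum>i\<in>{l..card M}. pmf (inter_card_pmf \<nu> k) i)"
proof -
  have "PrF \<nu> k l = measure_pmf.prob (inter_card_pmf \<nu> k) {l..}"
    by (simp add: PrF_def inter_card_pmf_def vimage_def atLeast_def)
  also have "\<dots> = measure_pmf.prob (inter_card_pmf \<nu> k) {l..card M}"
    using set_pmf_inter_card_pmf[OF assms]
    by (intro measure_eq_AE AE_pmfI) auto
  also have "\<dots> = (\<Sum>i\<in>{l..card M}. pmf (inter_card_pmf \<nu> k) i)"
    by (simp add: measure_measure_pmf_finite)
  finally show ?thesis .
qed

lemma card_choose_eq_card_level_subsets:
  assumes "finite M" and "T \<subseteq> M"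
  shows "card T choose j = card {X \<in> level_sets M j. X \<subseteq> T}"
proof -
  have "{X \<in> level_sets M j. X \<subseteq> T} = {X. X \<subseteq> T \<and> card X = j}"
    using assms(2) by (auto simp: level_sets_def)
  then show ?thesis
    using n_subsets[OF finite_subset[OF assms(2,1)]] by simp
qed

lemma binomial_moment_inter_card_pmf:
  assumes M: "finite M" and \<nu>: "set_pmf \<nu> \<subseteq> Pow M" and k: "1 \<le> k"
  shows "(\<Sum>i\<le>card M. real (i choose j) * pmf (inter_card_pmf \<nu> k) i) =
         (\<Sum>a\<in>#up_masses M \<nu> j. a ^ k)"
proof -
  let ?P = "Pi_pmf {1..k} {} (\<lambda>_. \<nu>)"
  let ?L = "level_sets M j"
  let ?E = "\<lambda>X. {S :: nat \<Rightarrow> 'a set. \<forall>i\<in>{1..k}. X \<subseteq> S i}"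
  have "finite (set_pmf ?P)"
    using finite_subset[OF \<nu>] M by (auto simp: set_Pi_pmf intro!: finite_PiE_dflt)
  then have integrable: "integrable (measure_pmf ?P) f" for f :: "_ \<Rightarrow> real"
    by (rule integrable_measure_pmf_finite)
  have "(\<Sum>i\<le>card M. real (i choose j) * pmf (inter_card_pmf \<nu> k) i) =
        measure_pmf.expectation (inter_card_pmf \<nu> k) (\<lambda>i. real (i choose j))"
    using set_pmf_inter_card_pmf[OF assms]
    by (subst integral_measure_pmf_real[where A = "{..card M}"]) (auto simp: mult.commute)
  also have "\<dots> = measure_pmf.expectation ?P (\<lambda>S. real (card (\<Inter>i\<in>{1..k}. S i) choose j))"
    by (simp add: inter_card_pmf_def)
  also have "\<dots> = measure_pmf.expectation ?P (\<lambda>S. \<Sum>X\<in>?L. indicator (?E X) S)"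
  proof (intro integral_cong_AE AE_pmfI)
    fix S assume "S \<in> set_pmf ?P"
    then have "(\<Inter>i\<in>{1..k}. S i) \<subseteq> M"
      using Inter_subset_if_in_set_Pi_pmf[OF \<nu> k] by blast
    then show "real (card (\<Inter>i\<in>{1..k}. S i) choose j) = (\<Sum>X\<in>?L. indicator (?E X) S)"
      using M k by (simp add: card_choose_eq_card_level_subsets indicator_def sum.If_cases
          finite_level_sets Int_def conj_commute le_INF_iff)
  qed auto
  also have "\<dots> = (\<Sum>X\<in>?L. measure_pmf.prob ?P (?E X))"
    by (subst Bochner_Integration.integral_sum[OF integrable]) simp
  also have "\<dots> = (\<Sum>X\<in>?L. up_mass M \<nu> X ^ k)"
  proof (rule sum.cong[OF refl])
    fix X
    have "?E X = Pi {1..k} (\<lambda>_. {Y. X \<subseteq> Y})" by (auto simp: Pi_def)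
    then show "measure_pmf.prob ?P (?E X) = up_mass M \<nu> X ^ k"
      by (simp add: measure_Pi_pmf_Pi up_mass_eq_prob_superset[OF \<nu>])
  qed
  also have "\<dots> = (\<Sum>a\<in>#up_masses M \<nu> j. a ^ k)"
    by (simp add: up_masses_def sum_unfold_sum_mset image_mset.compositionality o_def)
  finally show ?thesis .
qed

lemma eq_0_if_higher_binomial_moments_eq_0:
  fixes d :: "nat \<Rightarrow> 'a::comm_ring_1"
  assumes "\<forall>j\<in>{l<..m}. (\<Sum>i\<le>m. of_nat (i choose j) * d i) = 0" and "l < i" and "i \<le> m"
  shows "d i = 0"
  using assms(2,3)
proof (induction "m - i" arbitrary: i rule: less_induct)
  case less
  have "(\<Sum>i'\<le>m. of_nat (i' choose i) * d i') = (\<Sum>i'\<le>m. if i' = i then d i else 0)"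
  proof (rule sum.cong[OF refl])
    fix i' assume "i' \<in> {..m}"
    then consider "i' < i" | "i' = i" | "i < i'" "i' \<le> m" by fastforce
    then show "of_nat (i' choose i) * d i' = (if i' = i then d i else 0)"
      by cases (use less in \<open>auto simp: binomial_eq_0\<close>)
  qed
  then show "d i = 0"
    using assms(1) less.prems by simp
qed

lemma binomial_moment_eq_0_if_higher_and_tail_eq_0:
  fixes d :: "nat \<Rightarrow> 'a::comm_ring_1"
  assumes higher: "\<forall>j\<in>{l<..m}. (\<Sum>i\<le>m. of_nat (i choose j) * d i) = 0"
    and tail: "(\<Sum>i\<in>{l..m}. d i) = 0" and "l \<le> m"
  shows "(\<Sum>i\<le>m. of_nat (i choose l) * d i) = 0"
proof -
  have above: "d i = 0" if "l < i" "i \<le> m" for i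
    using eq_0_if_higher_binomial_moments_eq_0[OF higher that] .
  have "(\<Sum>i\<in>{l..m}. d i) = (\<Sum>i\<in>{l..m}. if i = l then d l else 0)"
    by (rule sum.cong[OF refl]) (use above in auto)
  with tail \<open>l \<le> m\<close> have "d l = 0" by simp
  show ?thesis
  proof (rule sum.neutral, rule ballI)
    fix i assume "i \<in> {..m}"
    then consider "i < l" | "i = l" | "l < i" "i \<le> m" by fastforce
    then show "of_nat (i choose l) * d i = 0"
      by cases (use above \<open>d l = 0\<close> in \<open>auto simp: binomial_eq_0\<close>)
  qed
qed

theorem up_masses_eq_if_PrF_eq:
  assumes M: "finite M" and \<mu>: "set_pmf \<mu> \<subseteq> Pow M" and \<nu>: "set_pmf \<nu> \<subseteq> Pow M"
    and PrF_eq: "\<forall>l\<in>{0..card M}. \<forall>k\<in>{1..card M choose l}. PrF \<mu> k l = PrF \<nu> k l"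
  shows "up_masses M \<mu> l = up_masses M \<nu> l"
proof (induction "card M - l" arbitrary: l rule: less_induct)
  case less
  show ?case
  proof (cases "l \<le> card M")
    case False
    then have "level_sets M l = {}"
      using M by (auto simp: level_sets_def dest: card_mono)
    then show ?thesis by (simp add: up_masses_def)
  next
    case True
    show ?thesis
    proof (rule mset_eq_if_power_sums_eq)
      fix k assume "1 \<le> k" "k \<le> size (up_masses M \<mu> l)"
      then have k: "k \<in> {1..card M choose l}" by (simp add: size_up_masses[OF M])
      define d where "d i = pmf (inter_card_pmf \<mu> k) i - pmf (inter_card_pmf \<nu> k) i" for i
      have moment: "(\<Sum>i\<le>card M. real (i choose j) * d i) =
                    (\<Sum>a\<in>#up_masses M \<mu> j. a ^ k) - (\<Sum>a\<in>#up_masses M \<nu> j. a ^ k)" for j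
        using k binomial_moment_inter_card_pmf[OF M \<mu>, of k j] binomial_moment_inter_card_pmf[OF M \<nu>, of k j]
        by (simp add: d_def right_diff_distrib sum_subtractf)
      have "\<forall>j\<in>{l<..card M}. (\<Sum>i\<le>card M. real (i choose j) * d i) = 0"
        using less by (auto simp: moment)
      moreover have "(\<Sum>i\<in>{l..card M}. d i) = 0"
        using k True PrF_eq PrF_eq_tail_sum[OF M \<mu>, of k l] PrF_eq_tail_sum[OF M \<nu>, of k l]
        by (simp add: d_def sum_subtractf)
      ultimately have "(\<Sum>i\<le>card M. real (i choose l) * d i) = 0"
        using True by (rule binomial_moment_eq_0_if_higher_and_tail_eq_0)
      then show "(\<Sum>a\<in>#up_masses M \<mu> l. a ^ k) = (\<Sum>a\<in>#up_masses M \<nu> l. a ^ k)"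
        by (simp add: moment)
    qed (simp add: size_up_masses[OF M])
  qed
qed

section \<open>Continuity in the distribution\<close>

lemma up_mass_eq_sum:
  assumes "finite M"
  shows "up_mass M \<nu> X = (\<Sum>Y\<in>{Y. Y \<subseteq> M \<and> X \<subseteq> Y}. pmf \<nu> Y)"
proof -
  have "finite {Y. Y \<subseteq> M \<and> X \<subseteq> Y}"
    by (rule finite_subset[of _ "Pow M"]) (use assms in auto)
  then show ?thesis
    unfolding up_mass_def by (rule measure_measure_pmf_finite)
qed

lemma measure_pmf_Int_superset_set_pmf:
  assumes "set_pmf p \<subseteq> A"
  shows "measure_pmf.prob p E = measure_pmf.prob p (E \<inter> A)"
proof -
  have "E \<inter> set_pmf p = (E \<inter> A) \<inter> set_pmf p"
    using assms by auto
  then show ?thesis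
    by (metis measure_Int_set_pmf)
qed

lemma PrF_eq_sum_prod:
  assumes "finite M" and "set_pmf \<nu> \<subseteq> Pow M"
  shows "PrF \<nu> k l = (\<Sum>S\<in>{S. l \<le> card (\<Inter>i\<in>{1..k}. S i)} \<inter> PiE_dflt {1..k} {} (\<lambda>_. Pow M).
                         \<Prod>i\<in>{1..k}. pmf \<nu> (S i))"
proof -
  let ?P = "Pi_pmf {1..k} {} (\<lambda>_. \<nu>)"
  let ?F = "{S. l \<le> card (\<Inter>i\<in>{1..k}. S i)} \<inter> PiE_dflt {1..k} {} (\<lambda>_. Pow M)"
  have "set_pmf ?P \<subseteq> PiE_dflt {1..k} {} (\<lambda>_. Pow M)"
    using set_Pi_pmf_subset'[OF finite_atLeastAtMost, of 1 k "{}" "\<lambda>_. \<nu>"] assms(2)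
    by (auto simp: PiE_dflt_def)
  then have "PrF \<nu> k l = measure_pmf.prob ?P ?F"
    unfolding PrF_def by (rule measure_pmf_Int_superset_set_pmf)
  also have "\<dots> = (\<Sum>S\<in>?F. pmf ?P S)"
  proof (rule measure_measure_pmf_finite)
    have "finite (PiE_dflt {1..k} {} (\<lambda>_. Pow M))"
      using assms(1) by (intro finite_PiE_dflt) auto
    then show "finite ?F" by blast
  qed
  also have "\<dots> = (\<Sum>S\<in>?F. \<Prod>i\<in>{1..k}. pmf \<nu> (S i))"
    by (intro sum.cong refl pmf_Pi') (auto simp: PiE_dflt_def)
  finally show ?thesis .
qed

lemma tendsto_up_mass:
  assumes "finite M" and "\<And>Y. (\<lambda>n. pmf (\<nu> n) Y) \<longlonglongrightarrow> pmf \<mu> Y"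
  shows "(\<lambda>n. up_mass M (\<nu> n) X) \<longlonglongrightarrow> up_mass M \<mu> X"
  unfolding up_mass_eq_sum[OF assms(1)] by (intro tendsto_sum assms(2))

lemma tendsto_PrF:
  assumes "finite M" and "\<And>n. set_pmf (\<nu> n) \<subseteq> Pow M" and "set_pmf \<mu> \<subseteq> Pow M"
    and "\<And>Y. (\<lambda>n. pmf (\<nu> n) Y) \<longlonglongrightarrow> pmf \<mu> Y"
  shows "(\<lambda>n. PrF (\<nu> n) k l) \<longlonglongrightarrow> PrF \<mu> k l"
  unfolding PrF_eq_sum_prod[OF assms(1,2)] PrF_eq_sum_prod[OF assms(1,3)]
  by (intro tendsto_sum tendsto_prod assms(4))

lemma convergent_subseq_finite:
  fixes f :: "nat \<Rightarrow> 'a \<Rightarrow> real"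
  assumes "finite I" and "\<And>n i. \<bar>f n i\<bar> \<le> B"
  shows "\<exists>r. strict_mono r \<and> (\<forall>i\<in>I. convergent (\<lambda>n. f (r n) i))"
  using assms(1)
proof (induction I rule: finite_induct)
  case empty
  show ?case by (intro exI[of _ id]) (simp add: strict_mono_def)
next
  case (insert a I)
  then obtain r where r: "strict_mono r" "\<forall>i\<in>I. convergent (\<lambda>n. f (r n) i)" by blast
  obtain t where t: "strict_mono t" "monoseq (\<lambda>n. f (r (t n)) a)"
    using seq_monosub[of "\<lambda>n. f (r n) a"] by (auto simp: o_def)
  have "Bseq (\<lambda>n. f (r (t n)) a)" by (rule BseqI'[of _ B]) (simp add: assms(2))
  then have "convergent (\<lambda>n. f (r (t n)) a)" using t(2) by (rule Bseq_monoseq_convergent)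
  moreover have "convergent (\<lambda>n. f (r (t n)) i)" if "i \<in> I" for i
    using convergent_subseq_convergent[OF r(2)[rule_format, OF that] t(1)] by (simp add: o_def)
  moreover have "strict_mono (\<lambda>n. r (t n))"
    using strict_mono_o[OF r(1) t(1)] by (simp add: o_def)
  ultimately show ?case by (intro exI[of _ "\<lambda>n. r (t n)"]) auto
qed

lemma convergent_subseq_pmf_finite_support:
  fixes p :: "nat \<Rightarrow> 'a pmf"
  assumes A: "finite A" and supp: "\<And>n. set_pmf (p n) \<subseteq> A"
  obtains r q where "strict_mono r" and "set_pmf q \<subseteq> A"
    and "\<And>x. (\<lambda>n. pmf (p (r n)) x) \<longlonglongrightarrow> pmf q x"
proof -
  obtain r where r: "strict_mono r" "\<forall>x\<in>A. convergent (\<lambda>n. pmf (p (r n)) x)"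
    using convergent_subseq_finite[OF A, of "\<lambda>n x. pmf (p n) x" 1] by (auto simp: pmf_le_1)
  define w where "w x = (if x \<in> A then lim (\<lambda>n. pmf (p (r n)) x) else 0)" for x
  have outside: "pmf (p n) x = 0" if "x \<notin> A" for n x
    using supp[of n] that by (auto simp: set_pmf_eq)
  have lim_w: "(\<lambda>n. pmf (p (r n)) x) \<longlonglongrightarrow> w x" for x
    using r(2) outside by (cases "x \<in> A") (simp_all add: w_def convergent_LIMSEQ_iff)
  have nonneg: "0 \<le> w x" for x
    by (rule LIMSEQ_le_const[OF lim_w]) simp
  have "(\<lambda>n. \<Sum>x\<in>A. pmf (p (r n)) x) \<longlonglongrightarrow> (\<Sum>x\<in>A. w x)"
    by (intro tendsto_sum lim_w)
  moreover have "(\<Sum>x\<in>A. pmf (p (r n)) x) = 1" for n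
    using supp A by (intro sum_pmf_eq_1) auto
  ultimately have "(\<Sum>x\<in>A. w x) = 1"
    by (simp add: LIMSEQ_const_iff)
  moreover have "(\<integral>\<^sup>+x. ennreal (w x) \<partial>count_space UNIV) = (\<Sum>x\<in>A. ennreal (w x))"
    using A by (intro nn_integral_count_space') (auto simp: w_def)
  ultimately have "(\<integral>\<^sup>+x. ennreal (w x) \<partial>count_space UNIV) = 1"
    using nonneg by (simp add: sum_ennreal)
  then have pmf_q: "pmf (embed_pmf w) x = w x" for x
    using nonneg by (intro pmf_embed_pmf)
  show ?thesis
  proof
    show "strict_mono r" by (fact r(1))
    show "set_pmf (embed_pmf w) \<subseteq> A"
      by (auto simp: set_pmf_eq pmf_q w_def)
    show "(\<lambda>n. pmf (p (r n)) x) \<longlonglongrightarrow> pmf (embed_pmf w) x" for x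
      using lim_w by (simp add: pmf_q)
  qed
qed

definition up_masses_close :: "'a set \<Rightarrow> real \<Rightarrow> 'a set pmf \<Rightarrow> 'a set pmf \<Rightarrow> bool" where
  "up_masses_close M \<epsilon> \<mu> \<nu> \<longleftrightarrow>
     (\<forall>l\<in>{0..card M}. \<exists>\<pi>. bij_betw \<pi> (level_sets M l) (level_sets M l) \<and>
        (\<forall>X\<in>level_sets M l. \<bar>up_mass M \<mu> X - up_mass M \<nu> (\<pi> X)\<bar> \<le> \<epsilon>))"

lemma eventually_up_masses_close:
  assumes M: "finite M" and same: "\<And>l. up_masses M \<mu> l = up_masses M \<mu>' l"
    and lim_pmf: "\<And>Y. (\<lambda>n. pmf (\<nu> n) Y) \<longlonglongrightarrow> pmf \<mu>' Y" and "\<epsilon> > 0"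
  shows "\<forall>\<^sub>F n in sequentially. up_masses_close M \<epsilon> \<mu> (\<nu> n)"
  unfolding up_masses_close_def
proof (intro eventually_ball_finite ballI)
  fix l
  obtain \<pi> where \<pi>: "\<pi> permutes level_sets M l"
    and eq: "\<And>X. X \<in> level_sets M l \<Longrightarrow> up_mass M \<mu> X = up_mass M \<mu>' (\<pi> X)"
    using image_mset_eq_implies_permutes[OF finite_level_sets[OF M] same[of l, unfolded up_masses_def]]
    by metis
  have "\<forall>\<^sub>F n in sequentially. \<forall>X\<in>level_sets M l. \<bar>up_mass M \<mu> X - up_mass M (\<nu> n) (\<pi> X)\<bar> \<le> \<epsilon>"
  proof (rule eventually_ball_finite[OF finite_level_sets[OF M]], rule ballI)
    fix X assume X: "X \<in> level_sets M l"
    have "(\<lambda>n. up_mass M (\<nu> n) (\<pi> X)) \<longlonglongrightarrow> up_mass M \<mu> X"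
      using tendsto_up_mass[OF M lim_pmf] eq[OF X] by simp
    from tendstoD[OF this \<open>\<epsilon> > 0\<close>]
    show "\<forall>\<^sub>F n in sequentially. \<bar>up_mass M \<mu> X - up_mass M (\<nu> n) (\<pi> X)\<bar> \<le> \<epsilon>"
      by eventually_elim (simp add: dist_real_def abs_minus_commute)
  qed
  then show "\<forall>\<^sub>F n in sequentially. \<exists>\<pi>. bij_betw \<pi> (level_sets M l) (level_sets M l) \<and>
               (\<forall>X\<in>level_sets M l. \<bar>up_mass M \<mu> X - up_mass M (\<nu> n) (\<pi> X)\<bar> \<le> \<epsilon>)"
    by eventually_elim (use permutes_imp_bij[OF \<pi>] in blast)
qed simp

lemma up_masses_close_if_PrF_tendsto:
  assumes M: "finite M" and \<mu>: "set_pmf \<mu> \<subseteq> Pow M" and \<nu>: "\<And>n. set_pmf (\<nu> n) \<subseteq> Pow M"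
    and lim: "\<And>l k. l \<le> card M \<Longrightarrow> 1 \<le> k \<Longrightarrow> k \<le> card M choose l \<Longrightarrow>
                (\<lambda>n. PrF (\<nu> n) k l) \<longlonglongrightarrow> PrF \<mu> k l"
    and "\<epsilon> > 0"
  shows "\<exists>n. up_masses_close M \<epsilon> \<mu> (\<nu> n)"
proof -
  obtain r \<mu>' where r: "strict_mono r" and \<mu>': "set_pmf \<mu>' \<subseteq> Pow M"
    and lim_pmf: "\<And>X. (\<lambda>n. pmf (\<nu> (r n)) X) \<longlonglongrightarrow> pmf \<mu>' X"
    using convergent_subseq_pmf_finite_support[of "Pow M" \<nu>] M \<nu> by auto
  have "PrF \<mu> k l = PrF \<mu>' k l" if "l \<in> {0..card M}" "k \<in> {1..card M choose l}" for l k
  proof (rule LIMSEQ_unique)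
    show "(\<lambda>n. PrF (\<nu> (r n)) k l) \<longlonglongrightarrow> PrF \<mu> k l"
      using LIMSEQ_subseq_LIMSEQ[OF lim r] that by (simp add: o_def)
    show "(\<lambda>n. PrF (\<nu> (r n)) k l) \<longlonglongrightarrow> PrF \<mu>' k l"
      using M \<nu> \<mu>' lim_pmf by (rule tendsto_PrF)
  qed
  then have "up_masses M \<mu> l = up_masses M \<mu>' l" for l
    using M \<mu> \<mu>' by (intro up_masses_eq_if_PrF_eq) auto
  then have "\<forall>\<^sub>F n in sequentially. up_masses_close M \<epsilon> \<mu> (\<nu> (r n))"
    using M lim_pmf \<open>\<epsilon> > 0\<close> by (intro eventually_up_masses_close)
  then show ?thesis
    unfolding eventually_sequentially by blast
qed

theorem lemma6:
  fixes M :: "'a set" and \<mu> :: "'a set pmf" and \<epsilon> :: real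
  assumes "finite M" and "set_pmf \<mu> \<subseteq> Pow M" and "\<epsilon> > 0"
  shows "\<exists>\<delta>>0. \<forall>\<mu>' :: 'a set pmf. set_pmf \<mu>' \<subseteq> Pow M \<longrightarrow>
           (\<forall>l\<in>{0..card M}. \<forall>k\<in>{1..card M choose l}. \<bar>PrF \<mu> k l - PrF \<mu>' k l\<bar> \<le> \<delta>) \<longrightarrow>
           (\<forall>l\<in>{0..card M}. \<exists>\<pi>. bij_betw \<pi> (level_sets M l) (level_sets M l) \<and>
              (\<forall>X\<in>level_sets M l. \<bar>up_mass M \<mu> X - up_mass M \<mu>' (\<pi> X)\<bar> \<le> \<epsilon>))"
proof (rule ccontr)
  assume "\<not> ?thesis"
  then have "\<forall>n::nat. \<exists>\<nu>. set_pmf \<nu> \<subseteq> Pow M \<and>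
      (\<forall>l\<in>{0..card M}. \<forall>k\<in>{1..card M choose l}. \<bar>PrF \<mu> k l - PrF \<nu> k l\<bar> \<le> inverse (Suc n)) \<and>
      \<not> up_masses_close M \<epsilon> \<mu> \<nu>"
    unfolding up_masses_close_def by (metis inverse_positive_iff_positive of_nat_0_less_iff zero_less_Suc)
  then obtain \<nu> where \<nu>: "\<And>n. set_pmf (\<nu> n) \<subseteq> Pow M"
    and close: "\<And>n l k. l \<in> {0..card M} \<Longrightarrow> k \<in> {1..card M choose l} \<Longrightarrow>
                  \<bar>PrF \<mu> k l - PrF (\<nu> n) k l\<bar> \<le> inverse (Suc n)"
    and far: "\<And>n. \<not> up_masses_close M \<epsilon> \<mu> (\<nu> n)"
    by metis
  have PrF_lim: "(\<lambda>n. PrF (\<nu> n) k l) \<longlonglongrightarrow> PrF \<mu> k l"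
    if "l \<le> card M" "1 \<le> k" "k \<le> card M choose l" for l k
  proof -
    have "(\<lambda>n. PrF (\<nu> n) k l - PrF \<mu> k l) \<longlonglongrightarrow> 0"
      by (rule Lim_null_comparison[OF always_eventually LIMSEQ_inverse_real_of_nat])
        (use close that in \<open>auto simp: abs_minus_commute\<close>)
    then show ?thesis by (simp add: LIM_zero_iff)
  qed
  obtain n where "up_masses_close M \<epsilon> \<mu> (\<nu> n)"
    using up_masses_close_if_PrF_tendsto[of M \<mu> \<nu>, OF assms(1,2) \<nu> PrF_lim assms(3)] by blast
  with far show False by blast
qed

end
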